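(* Let $G$ be a labeled complete bipartite graph (every edge labeled $+$ or $-$) with partite sets $V_1,V_2$, let $\alpha,\gamma$ be real parameters with $0<\gamma<\alpha<1/2$, and let $x$ be any fractional clustering of $G$. Let $\mathcal{C}$ be the clustering produced by the following algorithm (Algorithm 2), where ties in the choice of pivot are broken arbitrarily: Set $S=V(G)$. While $V_1\cap S\neq\emptyset$: for each $u\in V_1\cap S$ let $T_u=\{w\in S\setminus\{u\} : x_{uw}\le\alpha\}$ and $T^*_u=\{w\in V_2\cap S : x_{uw}\le\gamma\}$; choose a pivot $u\in V_1\cap S$ maximizing $|T^*_u|$ and let $T=T_u$; if $\sum_{w\in V_2\cap T}x_{uw}\ge\alpha|V_2\cap T|/2$, output the singleton cluster $\{u\}$ and set $S=S\setminus\{u\}$; otherwise output the cluster $\{u\}\cup T$ and set $S=S\setminus(\{u\}\cup T)$. After the loop, output each remaining vertex of $V_2\cap S$ as a singleton cluster. Then there is a constant $c$ depending only on $\alpha$ and $\gamma$ such that $\mathrm{err}(\mathcal{C})_v\le c\,\mathrm{err}(x)_v$ for all $v\in V_1$.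
   Context: A (discrete) clustering of $G$ is a partition of $V(G)$. A fractional clustering of $G$ is a vector $x$ indexed by all unordered pairs of distinct vertices of $G$ (not only edges) with $x_{uv}\in[0,1]$ for all pairs and $x_{vz}\le x_{vw}+x_{wz}$ for all distinct $v,w,z$; by convention $x_{uu}=0$. For vertex $v$, $N^+(v)$ and $N^-(v)$ denote the sets of vertices joined to $v$ by a $+$ edge, resp. a $-$ edge. The error vector of $x$ is the vector indexed by $V(G)$ with $\mathrm{err}(x)_v=\sum_{w\in N^+(v)}x_{vw}+\sum_{w\in N^-(v)}(1-x_{vw})$. For a clustering $\mathcal{C}$, $x^{\mathcal{C}}_{uv}=0$ if $u,v$ lie in the same cluster and $1$ otherwise, and $\mathrm{err}(\mathcal{C})=\mathrm{err}(x^{\mathcal{C}})$, i.e. the number of erroneous edges at each vertex ($+$ edges between clusters, $-$ edges within clusters). *)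

theory Defs
  imports Main "HOL-Library.Extended_Real" Complex_Main
begin

text \<open>Labeled complete bipartite graph with partite sets V1, V2: every pair {u,w} with
u in V1, w in V2 is an edge; its label is + iff lab u w (lab symmetric).\<close>

definition bip_adj :: "'a set \<Rightarrow> 'a set \<Rightarrow> 'a \<Rightarrow> 'a \<Rightarrow> bool" where
  "bip_adj V1 V2 u w \<longleftrightarrow> (u \<in> V1 \<and> w \<in> V2) \<or> (u \<in> V2 \<and> w \<in> V1)"

definition Npos :: "'a set \<Rightarrow> 'a set \<Rightarrow> ('a \<Rightarrow> 'a \<Rightarrow> bool) \<Rightarrow> 'a \<Rightarrow> 'a set" where
  "Npos V1 V2 lab v = {w. bip_adj V1 V2 v w \<and> lab v w}"

definition Nneg :: "'a set \<Rightarrow> 'a set \<Rightarrow> ('a \<Rightarrow> 'a \<Rightarrow> bool) \<Rightarrow> 'a \<Rightarrow> 'a set" where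
  "Nneg V1 V2 lab v = {w. bip_adj V1 V2 v w \<and> \<not> lab v w}"

definition frac_clustering :: "'a set \<Rightarrow> ('a \<Rightarrow> 'a \<Rightarrow> real) \<Rightarrow> bool" where
  "frac_clustering V x \<longleftrightarrow>
     (\<forall>u\<in>V. x u u = 0) \<and>
     (\<forall>u\<in>V. \<forall>w\<in>V. x u w = x w u) \<and>
     (\<forall>u\<in>V. \<forall>w\<in>V. u \<noteq> w \<longrightarrow> 0 \<le> x u w \<and> x u w \<le> 1) \<and>
     (\<forall>v\<in>V. \<forall>w\<in>V. \<forall>z\<in>V. v \<noteq> w \<and> w \<noteq> z \<and> v \<noteq> z \<longrightarrow> x v z \<le> x v w + x w z)"

definition err :: "'a set \<Rightarrow> 'a set \<Rightarrow> ('a \<Rightarrow> 'a \<Rightarrow> bool) \<Rightarrow> ('a \<Rightarrow> 'a \<Rightarrow> real) \<Rightarrow> 'a \<Rightarrow> real" where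
  "err V1 V2 lab x v =
     (\<Sum>w\<in>Npos V1 V2 lab v. x v w) + (\<Sum>w\<in>Nneg V1 V2 lab v. 1 - x v w)"

definition clust_vec :: "'a set set \<Rightarrow> 'a \<Rightarrow> 'a \<Rightarrow> real" where
  "clust_vec C u w = (if \<exists>K\<in>C. u \<in> K \<and> w \<in> K then 0 else 1)"

definition err_clust :: "'a set \<Rightarrow> 'a set \<Rightarrow> ('a \<Rightarrow> 'a \<Rightarrow> bool) \<Rightarrow> 'a set set \<Rightarrow> 'a \<Rightarrow> real" where
  "err_clust V1 V2 lab C v = err V1 V2 lab (clust_vec C) v"

definition T_set :: "('a \<Rightarrow> 'a \<Rightarrow> real) \<Rightarrow> real \<Rightarrow> 'a set \<Rightarrow> 'a \<Rightarrow> 'a set" where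
  "T_set x \<alpha> S u = {w \<in> S - {u}. x u w \<le> \<alpha>}"

definition Tstar_set :: "'a set \<Rightarrow> ('a \<Rightarrow> 'a \<Rightarrow> real) \<Rightarrow> real \<Rightarrow> 'a set \<Rightarrow> 'a \<Rightarrow> 'a set" where
  "Tstar_set V2 x \<gamma> S u = {w \<in> V2 \<inter> S. x u w \<le> \<gamma>}"

text \<open>alg2_run V1 V2 x \<alpha> \<gamma> S C: starting from remaining set S, Algorithm 2 (with some
  choice of tie-breaking) outputs the clusters C.\<close>
inductive alg2_run :: "'a set \<Rightarrow> 'a set \<Rightarrow> ('a \<Rightarrow> 'a \<Rightarrow> real) \<Rightarrow> real \<Rightarrow> real \<Rightarrow> 'a set \<Rightarrow> 'a set set \<Rightarrow> bool"
  for V1 V2 x \<alpha> \<gamma> where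
  stop: "V1 \<inter> S = {} \<Longrightarrow> alg2_run V1 V2 x \<alpha> \<gamma> S ((\<lambda>w. {w}) ` (V2 \<inter> S))"
| single: "\<lbrakk> u \<in> V1 \<inter> S;
            \<forall>u'\<in>V1 \<inter> S. card (Tstar_set V2 x \<gamma> S u') \<le> card (Tstar_set V2 x \<gamma> S u);
            (\<Sum>w\<in>V2 \<inter> T_set x \<alpha> S u. x u w) \<ge> \<alpha> * real (card (V2 \<inter> T_set x \<alpha> S u)) / 2;
            alg2_run V1 V2 x \<alpha> \<gamma> (S - {u}) C \<rbrakk>
           \<Longrightarrow> alg2_run V1 V2 x \<alpha> \<gamma> S (insert {u} C)"
| cluster: "\<lbrakk> u \<in> V1 \<inter> S;
            \<forall>u'\<in>V1 \<inter> S. card (Tstar_set V2 x \<gamma> S u') \<le> card (Tstar_set V2 x \<gamma> S u);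
            \<not> ((\<Sum>w\<in>V2 \<inter> T_set x \<alpha> S u. x u w) \<ge> \<alpha> * real (card (V2 \<inter> T_set x \<alpha> S u)) / 2);
            alg2_run V1 V2 x \<alpha> \<gamma> (S - ({u} \<union> T_set x \<alpha> S u)) C \<rbrakk>
           \<Longrightarrow> alg2_run V1 V2 x \<alpha> \<gamma> S (insert ({u} \<union> T_set x \<alpha> S u) C)"

end

theory Submission imports Defs begin

text \<open>When a vertex v of V1 leaves the remaining set S, all its edges to V2 \<inter> S are decided,
  and its errors on them are bounded by 1/\<kappa> times their fractional cost, where
  \<kappa> = min \<gamma> (1 - 2\<alpha>) / 2. Each bound compares edge by edge, up to a slack summing to at
  most 0. A singleton pivot u pays for its positive edges into T with the density condition
  (x u w averages at least \<alpha>/2 over V2 \<inter> T). A vertex v left outside a cluster with pivot u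
  has x u v > \<alpha>, so by the triangle inequality its positive edges into the cluster are paid
  for by the opposite, sparseness condition. A member v of a cluster loses positive edges
  cheaply only to vertices of T*(v) - T*(u), which lie outside T; by the maximality of
  |T*(u)| there are at least as many vertices in T*(u) - T*(v), which lie in T and whose
  edges to v are expensive whatever their label.\<close>

lemma frac_clustering_nonneg:
  assumes "frac_clustering V x" "a \<in> V" "b \<in> V"
  shows "0 \<le> x a b"
  using assms unfolding frac_clustering_def by (cases "a = b") auto

lemma frac_clustering_le_one:
  assumes "frac_clustering V x" "a \<in> V" "b \<in> V"
  shows "x a b \<le> 1"
  using assms unfolding frac_clustering_def by (cases "a = b") auto

lemma frac_clustering_sym:
  assumes "frac_clustering V x" "a \<in> V" "b \<in> V"
  shows "x a b = x b a"
  using assms unfolding frac_clustering_def by blast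

lemma frac_clustering_triangle:
  assumes x: "frac_clustering V x" and V: "a \<in> V" "b \<in> V" "c \<in> V"
  shows "x a c \<le> x a b + x b c"
proof (cases "a = b \<or> b = c \<or> a = c")
  case True
  have "x a a = 0" "x b b = 0" using x V unfolding frac_clustering_def by auto
  moreover have "0 \<le> x a b" "x a b = x b a"
    using frac_clustering_nonneg[OF x] frac_clustering_sym[OF x] V by auto
  ultimately show ?thesis using True by auto
next
  case False
  then show ?thesis using x V unfolding frac_clustering_def by blast
qed

definition edge_cost :: "('a \<Rightarrow> 'a \<Rightarrow> bool) \<Rightarrow> ('a \<Rightarrow> 'a \<Rightarrow> real) \<Rightarrow> 'a \<Rightarrow> 'a \<Rightarrow> real" where
  "edge_cost lab y v w = (if lab v w then y v w else 1 - y v w)"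

lemma err_eq_sum_edge_cost:
  assumes "V1 \<inter> V2 = {}" "finite V2" "v \<in> V1"
  shows "err V1 V2 lab y v = (\<Sum>w\<in>V2. edge_cost lab y v w)"
proof -
  have "Npos V1 V2 lab v = V2 \<inter> {w. lab v w}" "Nneg V1 V2 lab v = V2 \<inter> - {w. lab v w}"
    using assms by (auto simp: Npos_def Nneg_def bip_adj_def)
  then show ?thesis
    by (simp add: err_def edge_cost_def sum.If_cases[OF \<open>finite V2\<close>])
qed

lemma edge_cost_clust_vec:
  "edge_cost lab (clust_vec C) v w = of_bool (lab v w \<noteq> (\<exists>K\<in>C. v \<in> K \<and> w \<in> K))"
  by (simp add: edge_cost_def clust_vec_def)

lemma alg2_run_clusters_subset: "alg2_run V1 V2 x \<alpha> \<gamma> S C \<Longrightarrow> \<Union>C \<subseteq> S"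
  by (induction rule: alg2_run.induct) (auto simp: T_set_def)

lemma sum_le_sum_if_slack_nonpos:
  fixes f g h :: "'a \<Rightarrow> 'b::ordered_comm_monoid_add"
  assumes "\<And>a. a \<in> A \<Longrightarrow> f a \<le> g a + h a" and "sum h A \<le> 0"
  shows "sum f A \<le> sum g A"
proof -
  have "sum f A \<le> sum g A + sum h A"
    using sum_mono[of A f "\<lambda>a. g a + h a"] assms(1) by (simp add: sum.distrib)
  also have "\<dots> \<le> sum g A" using add_left_mono[OF assms(2)] by simp
  finally show ?thesis .
qed

definition charging_rate :: "real \<Rightarrow> real \<Rightarrow> real" where
  "charging_rate \<alpha> \<gamma> = min \<gamma> (1 - 2 * \<alpha>) / 2"

locale alg2_setting =
  fixes V1 V2 :: "'a set" and lab :: "'a \<Rightarrow> 'a \<Rightarrow> bool" and x :: "'a \<Rightarrow> 'a \<Rightarrow> real"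
    and \<alpha> \<gamma> :: real
  assumes finite_V2: "finite V2" and disjoint: "V1 \<inter> V2 = {}"
    and frac: "frac_clustering (V1 \<union> V2) x"
    and gamma_pos: "0 < \<gamma>" and gamma_less_alpha: "\<gamma> < \<alpha>" and alpha_less_half: "\<alpha> < 1/2"
begin

abbreviation \<kappa> :: real where "\<kappa> \<equiv> charging_rate \<alpha> \<gamma>"

lemma kappa_pos: "0 < \<kappa>"
  and kappa_le_gamma: "\<kappa> \<le> \<gamma> / 2"
  and kappa_le_gap: "\<kappa> \<le> (1 - 2 * \<alpha>) / 2"
  using gamma_pos alpha_less_half by (auto simp: charging_rate_def)

lemma x_nonneg: "a \<in> V1 \<union> V2 \<Longrightarrow> b \<in> V1 \<union> V2 \<Longrightarrow> 0 \<le> x a b"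
  and x_le_one: "a \<in> V1 \<union> V2 \<Longrightarrow> b \<in> V1 \<union> V2 \<Longrightarrow> x a b \<le> 1"
  and x_sym: "a \<in> V1 \<union> V2 \<Longrightarrow> b \<in> V1 \<union> V2 \<Longrightarrow> x a b = x b a"
  and x_triangle: "a \<in> V1 \<union> V2 \<Longrightarrow> b \<in> V1 \<union> V2 \<Longrightarrow> c \<in> V1 \<union> V2 \<Longrightarrow> x a c \<le> x a b + x b c"
  using frac_clustering_nonneg[OF frac] frac_clustering_le_one[OF frac]
    frac_clustering_sym[OF frac] frac_clustering_triangle[OF frac] by blast+

lemma singleton_pivot_charge:
  assumes S: "S \<subseteq> V1 \<union> V2" and u: "u \<in> V1 \<inter> S"
    and dense: "\<alpha> * card (V2 \<inter> T_set x \<alpha> S u) / 2 \<le> (\<Sum>w\<in>V2 \<inter> T_set x \<alpha> S u. x u w)"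
  shows "\<kappa> * (\<Sum>w\<in>V2 \<inter> S. of_bool (lab u w)) \<le> (\<Sum>w\<in>V2 \<inter> S. edge_cost lab x u w)"
proof -
  let ?T = "T_set x \<alpha> S u"
  have "(\<Sum>w\<in>V2 \<inter> S. \<kappa> * of_bool (lab u w)) \<le> (\<Sum>w\<in>V2 \<inter> S. edge_cost lab x u w)"
  proof (rule sum_le_sum_if_slack_nonpos)
    fix w assume w: "w \<in> V2 \<inter> S"
    then have "u \<noteq> w" "0 \<le> x u w" "x u w \<le> 1"
      using u S disjoint x_nonneg x_le_one by auto
    then show "\<kappa> * of_bool (lab u w) \<le> edge_cost lab x u w + of_bool (w \<in> ?T) * (\<alpha>/2 - x u w)"
      using w kappa_le_gamma gamma_less_alpha alpha_less_half
      by (auto simp: edge_cost_def T_set_def)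
  next
    have "V2 \<inter> S \<inter> {w. w \<in> ?T} = V2 \<inter> ?T" by (auto simp: T_set_def)
    then have "(\<Sum>w\<in>V2 \<inter> S. of_bool (w \<in> ?T) * (\<alpha>/2 - x u w)) = (\<Sum>w\<in>V2 \<inter> ?T. \<alpha>/2 - x u w)"
      using finite_V2 by simp
    also have "\<dots> \<le> 0" using dense by (simp add: sum_subtractf mult.commute)
    finally show "(\<Sum>w\<in>V2 \<inter> S. of_bool (w \<in> ?T) * (\<alpha>/2 - x u w)) \<le> 0" .
  qed
  then show ?thesis by (simp add: sum_distrib_left)
qed

lemma cluster_member_charge:
  assumes S: "S \<subseteq> V1 \<union> V2" and u: "u \<in> V1 \<inter> S"
    and v: "v \<in> V1 \<inter> S" "v = u \<or> v \<in> T_set x \<alpha> S u"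
    and max: "card (Tstar_set V2 x \<gamma> S v) \<le> card (Tstar_set V2 x \<gamma> S u)"
  shows "\<kappa> * (\<Sum>w\<in>V2 \<inter> S. of_bool (lab v w \<noteq> (w \<in> T_set x \<alpha> S u)))
    \<le> (\<Sum>w\<in>V2 \<inter> S. edge_cost lab x v w)"
proof -
  let ?T = "T_set x \<alpha> S u"
  define B where "B = Tstar_set V2 x \<gamma> S v - Tstar_set V2 x \<gamma> S u"
  define D where "D = Tstar_set V2 x \<gamma> S u - Tstar_set V2 x \<gamma> S v"
  have uV: "u \<in> V1 \<union> V2" and vV: "v \<in> V1 \<union> V2" using u v by auto
  have "x u u = 0" using frac uV unfolding frac_clustering_def by blast
  then have xuv: "x u v \<le> \<alpha>" using v gamma_pos gamma_less_alpha by (auto simp: T_set_def)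
  have "(\<Sum>w\<in>V2 \<inter> S. \<kappa> * of_bool (lab v w \<noteq> (w \<in> ?T))) \<le> (\<Sum>w\<in>V2 \<inter> S. edge_cost lab x v w)"
  proof (rule sum_le_sum_if_slack_nonpos)
    fix w assume w: "w \<in> V2 \<inter> S"
    then have wV: "w \<in> V1 \<union> V2" and "w \<noteq> u" using u disjoint by auto
    then have T: "w \<in> ?T \<longleftrightarrow> x u w \<le> \<alpha>" using w by (auto simp: T_set_def)
    have B: "w \<in> B \<longleftrightarrow> x v w \<le> \<gamma> \<and> \<not> x u w \<le> \<gamma>"
      and D: "w \<in> D \<longleftrightarrow> x u w \<le> \<gamma> \<and> \<not> x v w \<le> \<gamma>"
      using w by (auto simp: B_def D_def Tstar_set_def)
    have "x v w \<le> x u v + x u w" using x_triangle[OF vV uV wV] x_sym[OF uV vV] by simp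
    moreover have "0 \<le> x v w" "x v w \<le> 1" "0 \<le> x u w" using x_nonneg x_le_one uV vV wV by auto
    ultimately show "\<kappa> * of_bool (lab v w \<noteq> (w \<in> ?T))
      \<le> edge_cost lab x v w + \<kappa> * (of_bool (w \<in> B) - of_bool (w \<in> D))"
      unfolding T B D edge_cost_def
      using xuv kappa_pos kappa_le_gamma kappa_le_gap gamma_less_alpha by auto
  next
    have "card B \<le> card D"
      unfolding B_def D_def using max finite_V2 by (intro card_le_sym_Diff) (auto simp: Tstar_set_def)
    moreover have "V2 \<inter> S \<inter> {w. w \<in> B} = B" "V2 \<inter> S \<inter> {w. w \<in> D} = D"
      by (auto simp: B_def D_def Tstar_set_def)
    ultimately show "(\<Sum>w\<in>V2 \<inter> S. \<kappa> * (of_bool (w \<in> B) - of_bool (w \<in> D))) \<le> 0"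
      using finite_V2 kappa_pos
      by (simp add: sum_distrib_left[symmetric] sum_subtractf mult_nonneg_nonpos)
  qed
  then show ?thesis by (simp add: sum_distrib_left)
qed

lemma cluster_outsider_charge:
  assumes S: "S \<subseteq> V1 \<union> V2" and u: "u \<in> V1 \<inter> S"
    and v: "v \<in> V1 \<inter> S" "v \<noteq> u" "v \<notin> T_set x \<alpha> S u"
    and sparse: "(\<Sum>w\<in>V2 \<inter> T_set x \<alpha> S u. x u w) < \<alpha> * card (V2 \<inter> T_set x \<alpha> S u) / 2"
  shows "\<kappa> * (\<Sum>w\<in>V2 \<inter> T_set x \<alpha> S u. of_bool (lab v w))
    \<le> (\<Sum>w\<in>V2 \<inter> T_set x \<alpha> S u. edge_cost lab x v w)"
proof -
  let ?K = "V2 \<inter> T_set x \<alpha> S u"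
  have uV: "u \<in> V1 \<union> V2" and vV: "v \<in> V1 \<union> V2" using u v by auto
  have xuv: "\<alpha> < x u v" using v by (auto simp: T_set_def)
  have bounds: "x u v - x u w \<le> x v w \<and> x v w \<le> x u v + x u w \<and> 0 \<le> x v w \<and> x v w \<le> 1
      \<and> 0 \<le> x u w \<and> x u w \<le> \<alpha>" if w: "w \<in> ?K" for w
  proof -
    have wV: "w \<in> V1 \<union> V2" using w by auto
    show ?thesis
      using x_triangle[OF uV wV vV] x_triangle[OF vV uV wV] x_sym[OF uV vV] x_sym[OF vV wV]
        x_nonneg[OF uV wV] x_nonneg[OF vV wV] x_le_one[OF vV wV] w
      by (auto simp: T_set_def)
  qed
  have "(\<Sum>w\<in>?K. \<kappa> * of_bool (lab v w)) \<le> (\<Sum>w\<in>?K. edge_cost lab x v w)"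
  proof (cases "x u v \<le> 1 - \<alpha>/2")
    case True
    show ?thesis
    proof (rule sum_le_sum_if_slack_nonpos)
      fix w assume "w \<in> ?K"
      then show "\<kappa> * of_bool (lab v w) \<le> edge_cost lab x v w + (x u w - \<alpha>/2)"
        using bounds[OF \<open>w \<in> ?K\<close>] True xuv kappa_le_gamma gamma_less_alpha
        by (auto simp: edge_cost_def)
    next
      show "(\<Sum>w\<in>?K. x u w - \<alpha>/2) \<le> 0"
        using sparse by (simp add: sum_subtractf mult.commute)
    qed
  next
    case False
    show ?thesis
    proof (rule sum_mono)
      fix w assume "w \<in> ?K"
      then show "\<kappa> * of_bool (lab v w) \<le> edge_cost lab x v w"
        using bounds[OF \<open>w \<in> ?K\<close>] False kappa_le_gamma gamma_less_alpha alpha_less_half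
        by (auto simp: edge_cost_def)
    qed
  qed
  then show ?thesis by (simp add: sum_distrib_left)
qed

definition charged :: "'a set \<Rightarrow> 'a set set \<Rightarrow> bool" where
  "charged S C \<longleftrightarrow> (\<forall>v\<in>V1 \<inter> S.
     \<kappa> * (\<Sum>w\<in>V2 \<inter> S. edge_cost lab (clust_vec C) v w) \<le> (\<Sum>w\<in>V2 \<inter> S. edge_cost lab x v w))"

lemma charged_insert_singleton:
  assumes S: "S \<subseteq> V1 \<union> V2" and u: "u \<in> V1 \<inter> S"
    and dense: "\<alpha> * card (V2 \<inter> T_set x \<alpha> S u) / 2 \<le> (\<Sum>w\<in>V2 \<inter> T_set x \<alpha> S u. x u w)"
    and C: "\<Union>C \<subseteq> S - {u}" and charged: "charged (S - {u}) C"
  shows "charged S (insert {u} C)"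
  unfolding charged_def
proof
  fix v assume v: "v \<in> V1 \<inter> S"
  show "\<kappa> * (\<Sum>w\<in>V2 \<inter> S. edge_cost lab (clust_vec (insert {u} C)) v w)
    \<le> (\<Sum>w\<in>V2 \<inter> S. edge_cost lab x v w)"
  proof (cases "v = u")
    case True
    have "edge_cost lab (clust_vec (insert {u} C)) v w = of_bool (lab u w)" if "w \<in> V2 \<inter> S" for w
      using that True C u disjoint by (auto simp: edge_cost_clust_vec)
    then show ?thesis using singleton_pivot_charge[OF S u dense] True by simp
  next
    case False
    have "V2 \<inter> (S - {u}) = V2 \<inter> S" using u disjoint by auto
    moreover have "edge_cost lab (clust_vec (insert {u} C)) v = edge_cost lab (clust_vec C) v"
      using False by (auto simp: edge_cost_clust_vec)
    ultimately show ?thesis using charged v False by (auto simp: charged_def)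
  qed
qed

lemma charged_insert_cluster:
  assumes S: "S \<subseteq> V1 \<union> V2" and u: "u \<in> V1 \<inter> S"
    and max: "\<forall>u'\<in>V1 \<inter> S. card (Tstar_set V2 x \<gamma> S u') \<le> card (Tstar_set V2 x \<gamma> S u)"
    and sparse: "(\<Sum>w\<in>V2 \<inter> T_set x \<alpha> S u. x u w) < \<alpha> * card (V2 \<inter> T_set x \<alpha> S u) / 2"
    and C: "\<Union>C \<subseteq> S - ({u} \<union> T_set x \<alpha> S u)"
    and charged: "charged (S - ({u} \<union> T_set x \<alpha> S u)) C"
  shows "charged S (insert ({u} \<union> T_set x \<alpha> S u) C)"
  unfolding charged_def
proof
  let ?T = "T_set x \<alpha> S u"
  let ?K = "{u} \<union> ?T"
  fix v assume v: "v \<in> V1 \<inter> S"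
  show "\<kappa> * (\<Sum>w\<in>V2 \<inter> S. edge_cost lab (clust_vec (insert ?K C)) v w)
    \<le> (\<Sum>w\<in>V2 \<inter> S. edge_cost lab x v w)"
  proof (cases "v = u \<or> v \<in> ?T")
    case True
    have "edge_cost lab (clust_vec (insert ?K C)) v w = of_bool (lab v w \<noteq> (w \<in> ?T))"
      if "w \<in> V2 \<inter> S" for w
      using that True C u disjoint by (auto simp: edge_cost_clust_vec)
    then show ?thesis using cluster_member_charge[OF S u v True] max v by simp
  next
    case False
    have split: "V2 \<inter> S = V2 \<inter> (S - ?K) \<union> V2 \<inter> ?T" "V2 \<inter> (S - ?K) \<inter> (V2 \<inter> ?T) = {}"
      using u disjoint by (auto simp: T_set_def)
    have finite: "finite (V2 \<inter> (S - ?K))" "finite (V2 \<inter> ?T)" using finite_V2 by auto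
    have "edge_cost lab (clust_vec (insert ?K C)) v = edge_cost lab (clust_vec C) v"
      using False by (auto simp: edge_cost_clust_vec)
    then have rest: "\<kappa> * (\<Sum>w\<in>V2 \<inter> (S - ?K). edge_cost lab (clust_vec (insert ?K C)) v w)
        \<le> (\<Sum>w\<in>V2 \<inter> (S - ?K). edge_cost lab x v w)"
      using charged v False by (auto simp: charged_def)
    have "edge_cost lab (clust_vec (insert ?K C)) v w = of_bool (lab v w)" if "w \<in> V2 \<inter> ?T" for w
      using that False C by (auto simp: edge_cost_clust_vec)
    then have cut: "\<kappa> * (\<Sum>w\<in>V2 \<inter> ?T. edge_cost lab (clust_vec (insert ?K C)) v w)
        \<le> (\<Sum>w\<in>V2 \<inter> ?T. edge_cost lab x v w)"
      using cluster_outsider_charge[OF S u v _ _ sparse] False by simp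
    show ?thesis
      using add_mono[OF rest cut]
      unfolding split(1) sum.union_disjoint[OF finite split(2)] by (simp add: distrib_left)
  qed
qed

lemma alg2_run_charged: "alg2_run V1 V2 x \<alpha> \<gamma> S C \<Longrightarrow> S \<subseteq> V1 \<union> V2 \<Longrightarrow> charged S C"
proof (induction rule: alg2_run.induct)
  case (stop S)
  then show ?case by (simp add: charged_def)
next
  case (single u S C)
  then show ?case
    by (intro charged_insert_singleton alg2_run_clusters_subset) auto
next
  case (cluster u S C)
  then show ?case
    by (intro charged_insert_cluster alg2_run_clusters_subset) (auto simp: not_le)
qed

lemma alg2_err_clust_le:
  assumes "alg2_run V1 V2 x \<alpha> \<gamma> (V1 \<union> V2) C" "v \<in> V1"
  shows "err_clust V1 V2 lab C v \<le> 1 / \<kappa> * err V1 V2 lab x v"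
proof -
  have "V2 \<inter> (V1 \<union> V2) = V2" by blast
  then have "\<kappa> * err_clust V1 V2 lab C v \<le> err V1 V2 lab x v"
    using alg2_run_charged[OF assms(1)] assms(2) disjoint finite_V2
    by (simp add: charged_def err_clust_def err_eq_sum_edge_cost)
  then show ?thesis using kappa_pos by (simp add: field_simps)
qed

end

theorem theorem2:
  fixes \<alpha> \<gamma> :: real
  assumes "0 < \<gamma>" and "\<gamma> < \<alpha>" and "\<alpha> < 1/2"
  shows "\<exists>c::real. \<forall>(V1::nat set) (V2::nat set) (lab::nat \<Rightarrow> nat \<Rightarrow> bool)
            (x::nat \<Rightarrow> nat \<Rightarrow> real) (C::nat set set).
           finite V1 \<and> finite V2 \<and> V1 \<inter> V2 = {} \<and> (\<forall>u w. lab u w = lab w u) \<and>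
           frac_clustering (V1 \<union> V2) x \<and> alg2_run V1 V2 x \<alpha> \<gamma> (V1 \<union> V2) C
           \<longrightarrow> (\<forall>v\<in>V1. err_clust V1 V2 lab C v \<le> c * err V1 V2 lab x v)"
proof (rule exI[of _ "1 / charging_rate \<alpha> \<gamma>"], intro allI impI ballI)
  fix V1 V2 :: "nat set" and lab :: "nat \<Rightarrow> nat \<Rightarrow> bool" and x :: "nat \<Rightarrow> nat \<Rightarrow> real"
    and C :: "nat set set" and v
  assume H: "finite V1 \<and> finite V2 \<and> V1 \<inter> V2 = {} \<and> (\<forall>u w. lab u w = lab w u) \<and>
           frac_clustering (V1 \<union> V2) x \<and> alg2_run V1 V2 x \<alpha> \<gamma> (V1 \<union> V2) C" and "v \<in> V1"
  interpret alg2_setting V1 V2 lab x \<alpha> \<gamma> using H assms by unfold_locales auto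
  show "err_clust V1 V2 lab C v \<le> 1 / charging_rate \<alpha> \<gamma> * err V1 V2 lab x v"
    using alg2_err_clust_le H \<open>v \<in> V1\<close> by blast
qed

end
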